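(* Let $\epsilon\in(0,1]$ and $p \in (0,1)$ be constants and let $\xi>0$ be an arbitrary constant. Consider $\mathrm{USD}_p$ started from a configuration $\mathbf{x}(0)=(x_1(0),x_2(0),u(0))$ with $x_1(0)\in[\epsilon n, x_2(0)]$, $u(0)\le n/2$, and $|\Delta_w(0)| < \xi\sqrt{n\log n}$. Let $T_w := \inf\{t \geq 0 : |\Delta_w(t)| \geq \xi\sqrt{n\log n}\}$. Then with high probability $T_w = O(n\log^2 n)$.
   Context: Population protocol with $n$ agents, each in a state from $\{1,2,\bot\}$ (Opinion 1, Opinion 2, undecided). At each time step a scheduler picks an ordered pair $(i,j)$ of agents uniformly at random, independently of the past; only the initiator $i$ changes state. In $\mathrm{USD}_p$: if the initiator is $2$ and the responder $1$, the initiator becomes $\bot$; if the initiator is $1$ and the responder $2$, the initiator becomes $\bot$ with probability $1-p$ and otherwise stays $1$; if the initiator is $\bot$, it adopts the responder's state; otherwise nothing changes. $x_1(t),x_2(t),u(t)$ are the numbers of agents in states $1,2,\bot$ after $t$ interactions. The weighted bias is $\Delta_w(t) := x_1(t) - (1-p)x_2(t)$. "With high probability" means with probability at least $1-n^{-c}$ for a constant $c>0$. *)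

theory Defs
  imports "HOL-Probability.Probability"
begin

datatype opinion = Op1 | Op2 | Und

text \<open>A configuration assigns a state to each agent; agents are 0,...,n-1.\<close>
type_synonym config = "nat \<Rightarrow> opinion"

definition cnt :: "nat \<Rightarrow> opinion \<Rightarrow> config \<Rightarrow> nat" where
  "cnt n a s = card {i \<in> {0..<n}. s i = a}"

abbreviation x1 :: "nat \<Rightarrow> config \<Rightarrow> nat" where "x1 n s \<equiv> cnt n Op1 s"
abbreviation x2 :: "nat \<Rightarrow> config \<Rightarrow> nat" where "x2 n s \<equiv> cnt n Op2 s"
abbreviation und :: "nat \<Rightarrow> config \<Rightarrow> nat" where "und n s \<equiv> cnt n Und s"

definition delta_w :: "nat \<Rightarrow> real \<Rightarrow> config \<Rightarrow> real" where
  "delta_w n p s = real (x1 n s) - (1 - p) * real (x2 n s)"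

definition interact :: "real \<Rightarrow> config \<Rightarrow> nat \<Rightarrow> nat \<Rightarrow> config pmf" where
  "interact p s i j =
     (if s i = Op2 \<and> s j = Op1 then return_pmf (s(i := Und))
      else if s i = Op1 \<and> s j = Op2 then
        map_pmf (\<lambda>b. if b then s(i := Und) else s) (bernoulli_pmf (1 - p))
      else if s i = Und then return_pmf (s(i := s j))
      else return_pmf s)"

definition usd_step :: "nat \<Rightarrow> real \<Rightarrow> config \<Rightarrow> config pmf" where
  "usd_step n p s =
     bind_pmf (pmf_of_set {(i, j). i < n \<and> j < n \<and> i \<noteq> j}) (\<lambda>(i, j). interact p s i j)"

definition stopped :: "config set \<Rightarrow> (config \<Rightarrow> config pmf) \<Rightarrow> config \<Rightarrow> config pmf" where
  "stopped S K s = (if s \<in> S then return_pmf s else K s)"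

definition run :: "(config \<Rightarrow> config pmf) \<Rightarrow> nat \<Rightarrow> config \<Rightarrow> config pmf" where
  "run K t s = ((\<lambda>\<mu>. bind_pmf \<mu> K) ^^ t) (return_pmf s)"

definition hit_set :: "nat \<Rightarrow> real \<Rightarrow> real \<Rightarrow> config set" where
  "hit_set n p \<xi> = {s. \<bar>delta_w n p s\<bar> \<ge> \<xi> * sqrt (real n * ln (real n))}"

text \<open>P(T_w > t) from start s: probability that the chain stopped at hit_set is not
  in hit_set after t steps, i.e. has not hit it at any time 0..t.\<close>
definition prob_not_hit :: "nat \<Rightarrow> real \<Rightarrow> real \<Rightarrow> nat \<Rightarrow> config \<Rightarrow> real" where
  "prob_not_hit n p \<xi> t s =
     measure_pmf.prob (run (stopped (hit_set n p \<xi>) (usd_step n p)) t s) (- hit_set n p \<xi>)"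

end

theory Submission
  imports Defs "HOL-Analysis.Harmonic_Numbers" "HOL-Real_Asymp.Real_Asymp"
begin

(* Consider the potential  Phi = \<Delta>_w^2 + c H(x_1 + x_2)  with c = (1 - p) n / 4, where H is the
   harmonic number. As long as |\<Delta>_w| < \<xi> sqrt (n log n) <= (1 - p) n / 4, one interaction increases
   Phi in expectation by at least (1 - p)^2 / 128: the square term grows when decided agents meet,
   the harmonic term when undecided agents adopt an opinion, which dominates when few agents are
   decided. Below the threshold Phi = O(n log n), so by additive drift the threshold is hit within
   L = O(n log n) steps with probability at least 1 - 1/e, from every configuration below it.
   Restarting ceil (ln n) times gives failure probability at most 1/n within O(n log^2 n) steps. *)

section \<open>Absorbing Markov chains and additive drift\<close>

lemma run_0 [simp]: "run K 0 s = return_pmf s"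
  by (simp add: run_def)

lemma run_Suc: "run K (Suc t) s = run K t s \<bind> K"
  by (simp add: run_def)

lemma run_add: "run K (a + b) s = run K a s \<bind> run K b"
proof (induction b)
  case 0
  then show ?case by (simp add: bind_return_pmf')
next
  case (Suc b)
  then show ?case by (simp add: run_Suc bind_assoc_pmf)
qed

lemma run_absorbed:
  assumes "K s = return_pmf s"
  shows "run K t s = return_pmf s"
  using assms by (induction t) (auto simp: run_Suc bind_return_pmf)

lemma expectation_bind_pmf_finite:
  fixes h :: "'b \<Rightarrow> real"
  assumes "finite (set_pmf M)" "\<And>x. x \<in> set_pmf M \<Longrightarrow> finite (set_pmf (N x))"
  shows "measure_pmf.expectation (M \<bind> N) h =
         measure_pmf.expectation M (\<lambda>x. measure_pmf.expectation (N x) h)"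
  using assms by (simp add: pmf_expectation_bind[of "set_pmf M"] integral_measure_pmf[of "set_pmf M"])

lemma expectation_mono_finite:
  fixes f g :: "'a \<Rightarrow> real"
  assumes "finite (set_pmf M)" "\<And>x. x \<in> set_pmf M \<Longrightarrow> f x \<le> g x"
  shows "measure_pmf.expectation M f \<le> measure_pmf.expectation M g"
  using assms by (intro integral_mono_AE integrable_measure_pmf_finite) (auto simp: AE_measure_pmf_iff)

locale absorbing_chain =
  fixes K :: "config \<Rightarrow> config pmf" and I H :: "config set"
  assumes finite_K: "\<And>s. finite (set_pmf (K s))"
    and K_invariant: "\<And>s. s \<in> I \<Longrightarrow> set_pmf (K s) \<subseteq> I"
    and K_absorbing: "\<And>s. s \<in> H \<Longrightarrow> K s = return_pmf s"
begin

lemma finite_run: "finite (set_pmf (run K t s))"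
  by (induction t) (auto simp: run_Suc finite_K)

lemma run_invariant: "s \<in> I \<Longrightarrow> set_pmf (run K t s) \<subseteq> I"
  by (induction t) (use K_invariant in \<open>auto simp: run_Suc\<close>)

lemma prob_run_add:
  "measure_pmf.prob (run K (a + b) s) (-H) =
   measure_pmf.expectation (run K a s) (\<lambda>x. measure_pmf.prob (run K b x) (-H))"
  using expectation_bind_pmf_finite[of "run K a s" "run K b" "indicator (-H)"]
  by (simp add: run_add finite_run)

lemma prob_not_absorbed_antimono:
  assumes "j \<le> k"
  shows "measure_pmf.prob (run K k s) (-H) \<le> measure_pmf.prob (run K j s) (-H)"
proof -
  obtain d where k: "k = j + d" using assms le_Suc_ex by blast
  have "measure_pmf.prob (run K k s) (-H) =
      measure_pmf.expectation (run K j s) (\<lambda>x. measure_pmf.prob (run K d x) (-H))"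
    by (simp add: k prob_run_add)
  also have "\<dots> \<le> measure_pmf.expectation (run K j s) (indicator (-H))"
    by (rule expectation_mono_finite)
       (auto simp: finite_run run_absorbed K_absorbing split: split_indicator)
  finally show ?thesis by simp
qed

lemma additive_drift:
  fixes \<Phi> :: "config \<Rightarrow> real"
  assumes bounded: "\<And>s. s \<in> I \<Longrightarrow> 0 \<le> \<Phi> s \<and> \<Phi> s \<le> B"
    and drift: "\<And>s. s \<in> I \<Longrightarrow> s \<notin> H \<Longrightarrow> \<Phi> s + \<delta> \<le> measure_pmf.expectation (K s) \<Phi>"
    and "0 \<le> \<delta>" "s \<in> I"
  shows "real t * \<delta> * measure_pmf.prob (run K t s) (-H) \<le> B"
proof -
  define P where "P k = measure_pmf.prob (run K k s) (-H)" for k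
  have growth: "\<Phi> s + \<delta> * (\<Sum>j<k. P j) \<le> measure_pmf.expectation (run K k s) \<Phi>" for k
  proof (induction k)
    case (Suc k)
    have "\<Phi> s + \<delta> * (\<Sum>j<Suc k. P j) \<le>
        measure_pmf.expectation (run K k s) (\<lambda>x. \<Phi> x + \<delta> * indicator (-H) x)"
      using Suc.IH by (simp add: P_def distrib_left integrable_measure_pmf_finite finite_run)
    also have "\<dots> \<le> measure_pmf.expectation (run K k s) (\<lambda>x. measure_pmf.expectation (K x) \<Phi>)"
      by (rule expectation_mono_finite)
         (use run_invariant[OF \<open>s \<in> I\<close>] drift in
           \<open>auto simp: finite_run K_absorbing split: split_indicator\<close>)
    also have "\<dots> = measure_pmf.expectation (run K (Suc k) s) \<Phi>"
      by (simp add: run_Suc expectation_bind_pmf_finite finite_run finite_K)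
    finally show ?case .
  qed simp
  have "real t * P t \<le> (\<Sum>j<t. P j)"
    using sum_mono[of "{..<t}" "\<lambda>_. P t" P] prob_not_absorbed_antimono by (simp add: P_def)
  then have "\<delta> * (real t * P t) \<le> \<delta> * (\<Sum>j<t. P j)"
    using \<open>0 \<le> \<delta>\<close> by (rule mult_left_mono)
  also have "\<dots> \<le> measure_pmf.expectation (run K t s) \<Phi>"
    using growth[of t] bounded[OF \<open>s \<in> I\<close>] by linarith
  also have "\<dots> \<le> B"
    using expectation_mono_finite[of "run K t s" \<Phi> "\<lambda>_. B"] run_invariant[OF \<open>s \<in> I\<close>] bounded
    by (auto simp: finite_run)
  finally show ?thesis
    by (simp add: P_def mult_ac)
qed

lemma prob_not_absorbed_geometric:
  assumes round: "\<And>s. s \<in> I \<Longrightarrow> measure_pmf.prob (run K L s) (-H) \<le> r" and "s \<in> I"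
  shows "measure_pmf.prob (run K (k * L) s) (-H) \<le> r ^ k"
  using \<open>s \<in> I\<close>
proof (induction k arbitrary: s)
  case (Suc k)
  have "0 \<le> r" using round[OF Suc.prems] measure_nonneg order_trans by blast
  have "measure_pmf.prob (run K (Suc k * L) s) (-H) =
      measure_pmf.expectation (run K L s) (\<lambda>x. measure_pmf.prob (run K (k * L) x) (-H))"
    by (simp add: prob_run_add)
  also have "\<dots> \<le> measure_pmf.expectation (run K L s) (\<lambda>x. r ^ k * indicator (-H) x)"
    by (rule expectation_mono_finite)
       (use Suc.IH run_invariant[OF Suc.prems] in
         \<open>auto simp: finite_run run_absorbed K_absorbing split: split_indicator\<close>)
  also have "\<dots> \<le> r ^ k * r"
    using round[OF Suc.prems] \<open>0 \<le> r\<close> by (simp add: mult_left_mono)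
  finally show ?case by (simp add: mult.commute)
qed simp

lemma prob_not_absorbed_le_exp:
  fixes \<Phi> :: "config \<Rightarrow> real"
  assumes bounded: "\<And>s. s \<in> I \<Longrightarrow> 0 \<le> \<Phi> s \<and> \<Phi> s \<le> B"
    and drift: "\<And>s. s \<in> I \<Longrightarrow> s \<notin> H \<Longrightarrow> \<Phi> s + \<delta> \<le> measure_pmf.expectation (K s) \<Phi>"
    and L: "exp 1 * B < \<delta> * real L" and "s \<in> I"
  shows "measure_pmf.prob (run K (k * L) s) (-H) \<le> exp (- real k)"
proof -
  have "0 \<le> exp 1 * B" using bounded[OF \<open>s \<in> I\<close>] by simp
  then have "0 < \<delta> * real L" using L by linarith
  then have "0 < \<delta>" by (simp add: zero_less_mult_iff)
  have "measure_pmf.prob (run K L s') (-H) \<le> exp (-1)" if "s' \<in> I" for s'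
  proof -
    let ?P = "measure_pmf.prob (run K L s') (-H)"
    have "exp 1 * (\<delta> * real L * ?P) \<le> exp 1 * B"
      using additive_drift[OF bounded drift less_imp_le[OF \<open>0 < \<delta>\<close>] that, of L]
      by (simp add: mult.commute)
    also have "\<dots> < \<delta> * real L" by (fact L)
    finally have "(\<delta> * real L) * (exp 1 * ?P) < (\<delta> * real L) * 1" by (simp add: mult_ac)
    then have "exp 1 * ?P < 1" using \<open>0 < \<delta> * real L\<close> mult_less_cancel_left_pos by blast
    then show ?thesis by (simp add: exp_minus field_simps)
  qed
  then show ?thesis
    using prob_not_absorbed_geometric[of L "exp (-1)" s k] \<open>s \<in> I\<close>
    by (simp add: exp_of_nat_mult[symmetric])
qed

end

section \<open>Counting agents\<close>

lemma cnt_eq_sum: "real (cnt n a s) = (\<Sum>k<n. if s k = a then 1 else 0)"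
  by (simp add: cnt_def lessThan_atLeast0 sum.If_cases Int_def)

lemma sum_by_state:
  fixes g :: "opinion \<Rightarrow> real"
  shows "(\<Sum>k<n. g (s k)) = real (x1 n s) * g Op1 + real (x2 n s) * g Op2 + real (und n s) * g Und"
proof (induction n)
  case (Suc n)
  then show ?case by (cases "s n") (auto simp: cnt_eq_sum algebra_simps)
qed (simp add: cnt_eq_sum)

lemma cnt_total: "x1 n s + x2 n s + und n s = n"
  using sum_by_state[where g = "\<lambda>_. 1" and n = n and s = s] by (simp flip: of_nat_add)

lemma cnt_fun_upd:
  assumes "i < n"
  shows "real (cnt n a (s(i := v))) =
    real (cnt n a s) - (if s i = a then 1 else 0) + (if v = a then 1 else 0)"
proof -
  have "real (cnt n a (s(i := v))) = (\<Sum>k<n. if (s(i := v)) k = a then 1 else 0)"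
    by (rule cnt_eq_sum)
  also have "\<dots> = (if v = a then 1 else 0) + (\<Sum>k\<in>{..<n} - {i}. if s k = a then 1 else 0)"
    using assms by (simp add: sum.remove[of _ i])
  also have "(\<Sum>k\<in>{..<n} - {i}. if s k = a then 1 else (0::real)) =
      real (cnt n a s) - (if s i = a then 1 else 0)"
    using assms by (simp add: cnt_eq_sum sum_diff1)
  finally show ?thesis by linarith
qed

lemma cnt_pos:
  assumes "i < n" "s i = a"
  shows "1 \<le> cnt n a s"
proof -
  have "i \<in> {k \<in> {0..<n}. s k = a}" using assms by simp
  then have "0 < cnt n a s" unfolding cnt_def by (intro card_gt_0_iff[THEN iffD2]) auto
  then show ?thesis by simp
qed

abbreviation decided :: "nat \<Rightarrow> config \<Rightarrow> nat" where
  "decided n s \<equiv> x1 n s + x2 n s"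

definition weight :: "real \<Rightarrow> opinion \<Rightarrow> real" where
  "weight p a = (case a of Op1 \<Rightarrow> 1 | Op2 \<Rightarrow> - (1 - p) | Und \<Rightarrow> 0)"

lemma delta_w_fun_upd:
  "i < n \<Longrightarrow> delta_w n p (s(i := v)) = delta_w n p s - weight p (s i) + weight p v"
  by (cases "s i"; cases v) (simp_all add: delta_w_def weight_def cnt_fun_upd algebra_simps)

lemma decided_fun_upd:
  "i < n \<Longrightarrow> real (decided n (s(i := v))) =
     real (decided n s) - (if s i = Und then 0 else 1) + (if v = Und then 0 else 1)"
  by (cases "s i"; cases v) (simp_all add: cnt_fun_upd)

definition agent_pairs :: "nat \<Rightarrow> (nat \<times> nat) set" where
  "agent_pairs n = {(i, j). i < n \<and> j < n \<and> i \<noteq> j}"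

lemma agent_pairs_subset: "agent_pairs n \<subseteq> {..<n} \<times> {..<n}"
  by (auto simp: agent_pairs_def)

lemma finite_agent_pairs: "finite (agent_pairs n)"
  using agent_pairs_subset by (rule finite_subset) simp

lemma card_agent_pairs_le: "card (agent_pairs n) \<le> n * n"
  using card_mono[OF _ agent_pairs_subset] by simp

lemma agent_pairs_nonempty: "2 \<le> n \<Longrightarrow> agent_pairs n \<noteq> {}"
proof -
  assume "2 \<le> n"
  then have "(0, 1) \<in> agent_pairs n" by (simp add: agent_pairs_def)
  then show ?thesis by blast
qed

lemma sum_agent_pairs_by_state:
  fixes g :: "opinion \<Rightarrow> opinion \<Rightarrow> real"
  assumes "\<And>a. g a a = 0"
  shows "(\<Sum>(i, j)\<in>agent_pairs n. g (s i) (s j)) =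
    real (x1 n s) * (real (x2 n s) * g Op1 Op2 + real (und n s) * g Op1 Und)
    + real (x2 n s) * (real (x1 n s) * g Op2 Op1 + real (und n s) * g Op2 Und)
    + real (und n s) * (real (x1 n s) * g Und Op1 + real (x2 n s) * g Und Op2)"
proof -
  define h where
    "h a = real (x1 n s) * g a Op1 + real (x2 n s) * g a Op2 + real (und n s) * g a Und" for a
  have "(\<Sum>(i, j)\<in>agent_pairs n. g (s i) (s j)) =
      (\<Sum>(i, j)\<in>{..<n} \<times> {..<n}. g (s i) (s j))"
    by (rule sum.mono_neutral_left) (auto simp: agent_pairs_def assms)
  also have "\<dots> = (\<Sum>i<n. \<Sum>j<n. g (s i) (s j))"
    by (rule sum.cartesian_product[symmetric])
  also have "\<dots> = (\<Sum>i<n. h (s i))"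
    by (simp add: h_def sum_by_state mult.commute)
  also have "\<dots> = real (x1 n s) * h Op1 + real (x2 n s) * h Op2 + real (und n s) * h Und"
    by (rule sum_by_state)
  finally show ?thesis
    by (simp add: h_def assms algebra_simps)
qed

lemma set_pmf_usd_step:
  assumes "2 \<le> n"
  shows "set_pmf (usd_step n p s) = (\<Union>(i, j)\<in>agent_pairs n. set_pmf (interact p s i j))"
  unfolding usd_step_def agent_pairs_def[symmetric]
  using agent_pairs_nonempty[OF assms] finite_agent_pairs by (simp add: case_prod_unfold)

lemma finite_set_pmf_usd_step: "2 \<le> n \<Longrightarrow> finite (set_pmf (usd_step n p s))"
  by (auto simp: set_pmf_usd_step finite_agent_pairs interact_def)

lemma interact_successor:
  assumes "i < n" "j < n" "0 \<le> p" "p \<le> 1" "1 \<le> decided n s" "s' \<in> set_pmf (interact p s i j)"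
  shows "\<bar>delta_w n p s' - delta_w n p s\<bar> \<le> 1 \<and> 1 \<le> decided n s'"
proof -
  have weight: "\<bar>weight p a\<bar> \<le> 1" for a
    using assms(3,4) by (cases a) (auto simp: weight_def)
  have weight_Und: "weight p Und = 0"
    by (simp add: weight_def)
  consider "s' = s"
    | "s i \<noteq> Und" "s j \<noteq> Und" "s j \<noteq> s i" "s' = s(i := Und)"
    | "s i = Und" "s' = s(i := s j)"
    using assms(6) by (auto simp: interact_def split: if_splits)
  then show ?thesis
  proof cases
    case 2
    have "1 \<le> cnt n (s j) s'"
      using 2 assms(2) by (intro cnt_pos[of j]) auto
    then have "1 \<le> decided n s'"
      using 2 by (cases "s j") auto
    then show ?thesis
      using 2 weight[of "s i"] assms(1) by (simp add: delta_w_fun_upd weight_Und)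
  next
    case 3
    have "real (decided n s) \<le> real (decided n s')"
      using 3 decided_fun_upd[OF assms(1), of s "s j"] by simp
    then have "1 \<le> decided n s'"
      using assms(5) by linarith
    then show ?thesis
      using 3 weight assms(1) by (simp add: delta_w_fun_upd weight_Und)
  qed (use assms(5) in simp)
qed

section \<open>A potential with constant drift\<close>

definition usd_potential :: "nat \<Rightarrow> real \<Rightarrow> real \<Rightarrow> config \<Rightarrow> real" where
  "usd_potential n p c s = (delta_w n p s)\<^sup>2 + c * harm (decided n s)"

text \<open>D and d stand for the current weighted bias and number of decided agents; the (Op1, Op2)
  entry is already averaged over the coin that undecides the initiator.\<close>

definition potential_gain :: "real \<Rightarrow> real \<Rightarrow> real \<Rightarrow> real \<Rightarrow> opinion \<Rightarrow> opinion \<Rightarrow> real" where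
  "potential_gain q c D d a b =
     (case (a, b) of
        (Op2, Op1) \<Rightarrow> (D + q)\<^sup>2 - D\<^sup>2 - c / d
      | (Op1, Op2) \<Rightarrow> q * ((D - 1)\<^sup>2 - D\<^sup>2 - c / d)
      | (Und, Op1) \<Rightarrow> (D + 1)\<^sup>2 - D\<^sup>2 + c / (d + 1)
      | (Und, Op2) \<Rightarrow> (D - q)\<^sup>2 - D\<^sup>2 + c / (d + 1)
      | _ \<Rightarrow> 0)"

lemma harm_decided_undecide:
  assumes "i < n" "s i \<noteq> Und"
  shows "harm (decided n (s(i := Und))) = harm (decided n s) - 1 / real (decided n s)"
proof -
  have "decided n s = Suc (decided n (s(i := Und)))"
    using decided_fun_upd[OF assms(1), of s Und] assms(2) by simp
  then show ?thesis by (simp add: harm_Suc inverse_eq_divide)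
qed

lemma harm_decided_decide:
  assumes "i < n" "s i = Und" "v \<noteq> Und"
  shows "harm (decided n (s(i := v))) = harm (decided n s) + 1 / (real (decided n s) + 1)"
proof -
  have "decided n (s(i := v)) = Suc (decided n s)"
    using decided_fun_upd[OF assms(1), of s v] assms(2,3) by simp
  then show ?thesis by (simp add: harm_Suc inverse_eq_divide add.commute)
qed

lemma expectation_potential_interact:
  assumes "i < n" "0 \<le> p" "p \<le> 1"
  shows "measure_pmf.expectation (interact p s i j) (usd_potential n p c) =
    usd_potential n p c s + potential_gain (1 - p) c (delta_w n p s) (decided n s) (s i) (s j)"
proof -
  note simps = delta_w_fun_upd[OF assms(1)] harm_decided_undecide[OF assms(1)]
    harm_decided_decide[OF assms(1)] potential_gain_def weight_def usd_potential_def interact_def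
  show ?thesis
    using assms by (cases "s i"; cases "s j") (simp_all add: simps algebra_simps fun_upd_idem)
qed

definition drift_sum :: "real \<Rightarrow> real \<Rightarrow> real \<Rightarrow> real \<Rightarrow> real \<Rightarrow> real" where
  "drift_sum q c a b u =
    (let g = potential_gain q c (a - q * b) (a + b)
     in a * b * (g Op1 Op2 + g Op2 Op1) + u * a * g Und Op1 + u * b * g Und Op2)"

lemma expectation_potential_step:
  assumes "2 \<le> n" "0 \<le> p" "p \<le> 1"
  shows "measure_pmf.expectation (usd_step n p s) (usd_potential n p c) =
    usd_potential n p c s
    + drift_sum (1 - p) c (x1 n s) (x2 n s) (und n s) / real (card (agent_pairs n))"
proof -
  let ?g = "potential_gain (1 - p) c (delta_w n p s) (decided n s)"
  let ?N = "real (card (agent_pairs n))"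
  have "measure_pmf.expectation (usd_step n p s) (usd_potential n p c) =
      (\<Sum>(i, j)\<in>agent_pairs n. measure_pmf.expectation (interact p s i j) (usd_potential n p c) / ?N)"
    unfolding usd_step_def agent_pairs_def[symmetric]
    using assms agent_pairs_nonempty finite_agent_pairs
    by (subst pmf_expectation_bind_pmf_of_set) (auto simp: interact_def case_prod_unfold divide_inverse_commute)
  also have "\<dots> = (\<Sum>(i, j)\<in>agent_pairs n. (usd_potential n p c s + ?g (s i) (s j)) / ?N)"
    using assms by (intro sum.cong) (auto simp: agent_pairs_def expectation_potential_interact)
  also have "\<dots> = usd_potential n p c s + (\<Sum>(i, j)\<in>agent_pairs n. ?g (s i) (s j)) / ?N"
    using agent_pairs_nonempty[OF assms(1)] finite_agent_pairs
    by (simp add: sum_divide_distrib[symmetric] sum.distrib case_prod_unfold field_simps)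
  also have "(\<Sum>(i, j)\<in>agent_pairs n. ?g (s i) (s j)) = drift_sum (1 - p) c (x1 n s) (x2 n s) (und n s)"
    by (subst sum_agent_pairs_by_state)
       (auto simp: potential_gain_def drift_sum_def delta_w_def algebra_simps split: opinion.split)
  finally show ?thesis .
qed

lemma drift_sum_eq:
  "drift_sum q c a b u =
     (1 + q) * a * b * (q - c / (a + b)) + u * (a + q\<^sup>2 * b) + 2 * u * (a - q * b)\<^sup>2
     + u * (a + b) * (c / (a + b + 1))"
  by (simp add: drift_sum_def potential_gain_def power2_eq_square algebra_simps add_divide_distrib)

lemma product_ge_of_small_bias:
  fixes q a b :: real
  assumes "0 \<le> q" "q \<le> 1" "0 \<le> a" "0 \<le> b" "\<bar>a - q * b\<bar> \<le> q * (a + b) / 2"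
  shows "q * (a + b)\<^sup>2 / 16 \<le> a * b"
proof -
  have bias: "a - q * b \<le> q * (a + b) / 2" "q * b - a \<le> q * (a + b) / 2"
    using assms(5) unfolding abs_le_iff by linarith+
  have "q * (a + b) / 2 \<le> q * (a + b) + (a - q * b)"
    using bias(2) by linarith
  also have "\<dots> = (1 + q) * a"
    by (simp add: algebra_simps)
  finally have a_bound: "q * (a + b) / 2 \<le> (1 + q) * a" .
  have "q * (a + b) \<le> a + b"
    using assms by (simp add: mult_left_le_one_le)
  then have "(a + b) / 2 \<le> (a + b) - q * (a + b) / 2"
    by argo
  also have "\<dots> \<le> (a + b) - (a - q * b)"
    using bias(1) by linarith
  also have "\<dots> = (1 + q) * b"
    by (simp add: algebra_simps)
  finally have b_bound: "(a + b) / 2 \<le> (1 + q) * b" .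
  have "q * (a + b) / 2 * ((a + b) / 2) \<le> (1 + q) * a * ((1 + q) * b)"
    using a_bound b_bound assms by (intro mult_mono) auto
  also have "\<dots> = (1 + q)\<^sup>2 * (a * b)"
    by (simp add: power2_eq_square algebra_simps)
  also have "\<dots> \<le> 2\<^sup>2 * (a * b)"
    using assms by (intro mult_right_mono power_mono) auto
  finally show ?thesis by (simp add: power2_eq_square)
qed

lemma drift_sum_lower_bound_mostly_decided:
  fixes q a b u N :: real
  assumes "0 \<le> a" "0 \<le> b" "0 \<le> u" "a + b + u = N" "1 \<le> a + b" "0 < q" "q \<le> 1"
    and bias: "\<bar>a - q * b\<bar> \<le> q * N / 4" and decided: "N \<le> 2 * (a + b)"
  shows "q\<^sup>2 * N\<^sup>2 / 128 \<le> drift_sum q (q * N / 4) a b u"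
proof -
  define d where "d = a + b"
  have d: "1 \<le> d" "N \<le> 2 * d" using assms by (auto simp: d_def)
  have loss: "q * N / 4 / d \<le> q / 2"
    using d assms by (simp add: field_simps)
  have "q * N \<le> 2 * (q * d)"
    using d assms by (simp add: mult_left_mono)
  then have "\<bar>a - q * b\<bar> \<le> q * d / 2"
    using bias by linarith
  then have "q * d\<^sup>2 / 16 \<le> a * b"
    unfolding d_def using assms by (intro product_ge_of_small_bias) auto
  have "N\<^sup>2 \<le> (2 * d)\<^sup>2"
    using d assms by (intro power_mono) auto
  then have "q\<^sup>2 * N\<^sup>2 \<le> q\<^sup>2 * (4 * d\<^sup>2)"
    by (intro mult_left_mono) (auto simp: power_mult_distrib)
  then have "q\<^sup>2 * N\<^sup>2 / 128 \<le> q * d\<^sup>2 / 16 * (q / 2)"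
    by (simp add: power2_eq_square mult_ac)
  also have "\<dots> \<le> a * b * (q / 2)"
    using \<open>q * d\<^sup>2 / 16 \<le> a * b\<close> assms by (intro mult_right_mono) auto
  also have "\<dots> \<le> (1 + q) * (a * b) * (q - q * N / 4 / d)"
  proof (rule mult_mono)
    have "0 \<le> q * (a * b)" using assms by simp
    then show "a * b \<le> (1 + q) * (a * b)" by (simp add: distrib_right)
  qed (use loss assms in auto)
  also have "\<dots> \<le> drift_sum q (q * N / 4) a b u"
    using drift_sum_eq[of q "q * N / 4" a b u, folded d_def] d assms by (simp add: mult.assoc)
  finally show ?thesis .
qed

lemma mostly_undecided_drift_bound:
  fixes q d N :: real
  assumes "0 \<le> q" "q \<le> 1" "0 \<le> d" "2 * d \<le> N"
  shows "q\<^sup>2 * N\<^sup>2 / 128 \<le> q\<^sup>2 * (N - d) * d + q * N * (N - 2 * d) / 8"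
proof -
  have "0 \<le> d * (3 * N / 4 - d)"
    using assms by simp
  moreover have "(N - d) * d + N * (N - 2 * d) / 8 = N\<^sup>2 / 8 + d * (3 * N / 4 - d)"
    by (simp add: power2_eq_square field_simps)
  ultimately have "q\<^sup>2 * (N\<^sup>2 / 8) \<le> q\<^sup>2 * ((N - d) * d + N * (N - 2 * d) / 8)"
    by (intro mult_left_mono) auto
  moreover have "q\<^sup>2 * (N * (N - 2 * d)) \<le> q * (N * (N - 2 * d))"
    using assms by (intro mult_right_mono) (auto simp: power2_eq_square mult_left_le_one_le)
  moreover have "q\<^sup>2 * ((N - d) * d + N * (N - 2 * d) / 8) =
      q\<^sup>2 * (N - d) * d + q\<^sup>2 * (N * (N - 2 * d)) / 8"
    by (simp add: algebra_simps)
  moreover have "q\<^sup>2 * N\<^sup>2 / 128 \<le> q\<^sup>2 * (N\<^sup>2 / 8)"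
    by simp
  ultimately show ?thesis
    by (simp only: mult.assoc)
qed

lemma drift_sum_lower_bound_mostly_undecided:
  fixes q a b u N :: real
  assumes "0 \<le> a" "0 \<le> b" "0 \<le> u" and N: "a + b + u = N" and "1 \<le> a + b" "0 < q" "q \<le> 1"
    and undecided: "2 * (a + b) \<le> N"
  shows "q\<^sup>2 * N\<^sup>2 / 128 \<le> drift_sum q (q * N / 4) a b u"
proof -
  define d where "d = a + b"
  have d: "1 \<le> d" "2 * d \<le> N" "u = N - d" using assms by (auto simp: d_def)
  have "a * b \<le> d\<^sup>2 / 4"
    using sum_squares_ge_zero[of "a - b" 0] by (simp add: d_def power2_eq_square algebra_simps)
  then have "(1 + q) * (a * b) \<le> 2 * (d\<^sup>2 / 4)"
    using assms by (intro mult_mono) auto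
  then have "(1 + q) * (a * b) * (q * N / 4 / d) \<le> 2 * (d\<^sup>2 / 4) * (q * N / 4 / d)"
    using d assms by (intro mult_right_mono) auto
  then have loss: "(1 + q) * a * b * (q * N / 4 / d) \<le> q * N * d / 8"
    using d by (simp add: power2_eq_square mult_ac)
  have "q * N * (d + 1) \<le> q * N * (2 * d)"
    using d assms by (intro mult_left_mono) auto
  then have "q * N / 8 \<le> d * (q * N / 4 / (d + 1))"
    using d by (simp add: field_simps)
  then have gain: "u * (q * N / 8) \<le> u * (d * (q * N / 4 / (d + 1)))"
    using assms by (intro mult_left_mono) auto
  have "q\<^sup>2 * a \<le> a" using assms by (simp add: mult_left_le_one_le power_le_one)
  have "q\<^sup>2 * u * d = u * (q\<^sup>2 * a + q\<^sup>2 * b)"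
    by (simp add: d_def algebra_simps)
  also have "\<dots> \<le> u * (a + q\<^sup>2 * b)"
    using \<open>q\<^sup>2 * a \<le> a\<close> \<open>0 \<le> u\<close> by (intro mult_left_mono) auto
  finally have adopt: "q\<^sup>2 * u * d \<le> u * (a + q\<^sup>2 * b)" .
  have "q\<^sup>2 * N\<^sup>2 / 128 \<le> q\<^sup>2 * u * d + q * N * (N - 2 * d) / 8"
    using mostly_undecided_drift_bound[of q d N] d assms by simp
  moreover have "0 \<le> (1 + q) * a * b * q" using assms by simp
  moreover have "(1 + q) * a * b * (q - q * N / 4 / d) =
      (1 + q) * a * b * q - (1 + q) * a * b * (q * N / 4 / d)"
    by (simp add: right_diff_distrib)
  moreover have "q * N * (N - 2 * d) / 8 = u * (q * N / 8) - q * N * d / 8"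
    by (simp add: d(3) field_simps)
  moreover have "u * d * (q * N / 4 / (d + 1)) = u * (d * (q * N / 4 / (d + 1)))"
    by (simp add: mult.assoc)
  moreover have "0 \<le> 2 * u * (a - q * b)\<^sup>2" using assms by simp
  ultimately show ?thesis
    using drift_sum_eq[of q "q * N / 4" a b u, folded d_def] adopt loss gain by linarith
qed

lemma drift_sum_lower_bound:
  fixes q a b u N :: real
  assumes "0 \<le> a" "0 \<le> b" "0 \<le> u" "a + b + u = N" "1 \<le> a + b" "0 < q" "q \<le> 1"
    and "\<bar>a - q * b\<bar> \<le> q * N / 4"
  shows "q\<^sup>2 * N\<^sup>2 / 128 \<le> drift_sum q (q * N / 4) a b u"
  using assms drift_sum_lower_bound_mostly_decided drift_sum_lower_bound_mostly_undecided
  by (cases "N \<le> 2 * (a + b)") auto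

lemma usd_potential_drift:
  assumes "2 \<le> n" "0 \<le> p" "p < 1" "1 \<le> decided n s" "\<bar>delta_w n p s\<bar> \<le> (1 - p) * real n / 4"
  shows "usd_potential n p ((1 - p) * real n / 4) s + (1 - p)\<^sup>2 / 128
           \<le> measure_pmf.expectation (usd_step n p s) (usd_potential n p ((1 - p) * real n / 4))"
proof -
  let ?D = "drift_sum (1 - p) ((1 - p) * real n / 4) (x1 n s) (x2 n s) (und n s)"
  have "(1 - p)\<^sup>2 * (real n)\<^sup>2 / 128 \<le> ?D"
  proof (rule drift_sum_lower_bound)
    show "real (x1 n s) + real (x2 n s) + real (und n s) = real n"
      using cnt_total[of n s] by (simp flip: of_nat_add)
  qed (use assms in \<open>auto simp: delta_w_def\<close>)
  moreover have "real (card (agent_pairs n)) \<le> (real n)\<^sup>2"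
    using card_agent_pairs_le[of n] by (simp add: power2_eq_square flip: of_nat_mult)
  then have "(1 - p)\<^sup>2 / 128 * real (card (agent_pairs n)) \<le> (1 - p)\<^sup>2 / 128 * (real n)\<^sup>2"
    by (intro mult_left_mono) auto
  moreover have "0 < real (card (agent_pairs n))"
    using agent_pairs_nonempty[OF assms(1)] finite_agent_pairs by (simp add: card_gt_0_iff)
  ultimately have "(1 - p)\<^sup>2 / 128 \<le> ?D / real (card (agent_pairs n))"
    by (simp add: pos_le_divide_eq)
  then show ?thesis
    using assms by (simp add: expectation_potential_step)
qed

lemma harm_le_one_plus_ln: "1 \<le> n \<Longrightarrow> harm n \<le> 1 + ln (real n)"
  using euler_mascheroni_sequence_decreasing[of 1 n] by (simp add: harm_def)

text \<open>The slack 1 is needed because the step that hits the threshold can overshoot it by one.\<close>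

definition usd_invariant :: "nat \<Rightarrow> real \<Rightarrow> real \<Rightarrow> config set" where
  "usd_invariant n p \<theta> = {s. 1 \<le> decided n s \<and> \<bar>delta_w n p s\<bar> < \<theta> + 1}"

lemma usd_potential_bounds:
  assumes "1 \<le> n" "0 \<le> c" "s \<in> usd_invariant n p \<theta>"
  shows "0 \<le> usd_potential n p c s \<and> usd_potential n p c s \<le> (\<theta> + 1)\<^sup>2 + c * (1 + ln (real n))"
proof -
  have "harm (decided n s) \<le> (harm n :: real)"
    using cnt_total[of n s] by (intro harm_mono) linarith
  also have "\<dots> \<le> 1 + ln (real n)"
    using assms(1) by (rule harm_le_one_plus_ln)
  finally have "c * harm (decided n s) \<le> c * (1 + ln (real n))"
    using assms(2) by (rule mult_left_mono)
  moreover have "(delta_w n p s)\<^sup>2 \<le> (\<theta> + 1)\<^sup>2"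
    using assms(3) by (subst power2_le_iff_abs_le) (auto simp: usd_invariant_def)
  moreover have "0 \<le> c * harm (decided n s)"
    using assms(2) by (simp add: harm_nonneg)
  ultimately show ?thesis
    by (simp add: usd_potential_def)
qed

section \<open>Hitting the threshold\<close>

lemma absorbing_chain_usd:
  assumes "2 \<le> n" "0 \<le> p" "p \<le> 1"
  shows "absorbing_chain (stopped (hit_set n p \<xi>) (usd_step n p))
           (usd_invariant n p (\<xi> * sqrt (real n * ln (real n)))) (hit_set n p \<xi>)"
proof
  fix s
  show "finite (set_pmf (stopped (hit_set n p \<xi>) (usd_step n p) s))"
    using finite_set_pmf_usd_step[OF assms(1)] by (simp add: stopped_def)
  show "s \<in> hit_set n p \<xi> \<Longrightarrow> stopped (hit_set n p \<xi>) (usd_step n p) s = return_pmf s"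
    by (simp add: stopped_def)
  assume s: "s \<in> usd_invariant n p (\<xi> * sqrt (real n * ln (real n)))"
  show "set_pmf (stopped (hit_set n p \<xi>) (usd_step n p) s)
          \<subseteq> usd_invariant n p (\<xi> * sqrt (real n * ln (real n)))"
  proof (cases "s \<in> hit_set n p \<xi>")
    case False
    show ?thesis
    proof
      fix s' assume "s' \<in> set_pmf (stopped (hit_set n p \<xi>) (usd_step n p) s)"
      then obtain i j where "i < n" "j < n" "s' \<in> set_pmf (interact p s i j)"
        using False by (auto simp: stopped_def set_pmf_usd_step[OF assms(1)] agent_pairs_def)
      then have "\<bar>delta_w n p s' - delta_w n p s\<bar> \<le> 1 \<and> 1 \<le> decided n s'"
        using s assms(2,3) by (intro interact_successor) (auto simp: usd_invariant_def)
      then show "s' \<in> usd_invariant n p (\<xi> * sqrt (real n * ln (real n)))"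
        using False by (auto simp: usd_invariant_def hit_set_def)
    qed
  qed (use s in \<open>simp add: stopped_def\<close>)
qed

lemma prob_not_hit_antimono:
  assumes "2 \<le> n" "0 \<le> p" "p \<le> 1" "t \<le> t'"
  shows "prob_not_hit n p \<xi> t' s \<le> prob_not_hit n p \<xi> t s"
proof -
  interpret absorbing_chain "stopped (hit_set n p \<xi>) (usd_step n p)" UNIV "hit_set n p \<xi>"
    using absorbing_chain_usd[OF assms(1-3)] by (simp add: absorbing_chain_def)
  show ?thesis
    unfolding prob_not_hit_def using assms(4) by (rule prob_not_absorbed_antimono)
qed

lemma prob_not_hit_le_exp:
  fixes n :: nat and p \<xi> :: real
  defines "\<theta> \<equiv> \<xi> * sqrt (real n * ln (real n))"
  assumes "2 \<le> n" "0 \<le> p" "p < 1" and small: "\<theta> \<le> (1 - p) * real n / 4"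
    and start: "s \<in> usd_invariant n p \<theta>"
    and L: "exp 1 * ((\<theta> + 1)\<^sup>2 + (1 - p) * real n / 4 * (1 + ln (real n))) < (1 - p)\<^sup>2 / 128 * real L"
  shows "prob_not_hit n p \<xi> (k * L) s \<le> exp (- real k)"
proof -
  let ?c = "(1 - p) * real n / 4"
  interpret absorbing_chain "stopped (hit_set n p \<xi>) (usd_step n p)" "usd_invariant n p \<theta>" "hit_set n p \<xi>"
    unfolding \<theta>_def using assms by (intro absorbing_chain_usd) auto
  show ?thesis
    unfolding prob_not_hit_def
  proof (rule prob_not_absorbed_le_exp[OF _ _ L start])
    fix s' assume s': "s' \<in> usd_invariant n p \<theta>"
    then show "0 \<le> usd_potential n p ?c s' \<and>
        usd_potential n p ?c s' \<le> (\<theta> + 1)\<^sup>2 + ?c * (1 + ln (real n))"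
      using assms by (intro usd_potential_bounds) auto
    assume "s' \<notin> hit_set n p \<xi>"
    then show "usd_potential n p ?c s' + (1 - p)\<^sup>2 / 128
        \<le> measure_pmf.expectation (stopped (hit_set n p \<xi>) (usd_step n p) s') (usd_potential n p ?c)"
      using s' small assms by (auto simp: stopped_def hit_set_def usd_invariant_def \<theta>_def intro!: usd_potential_drift)
  qed
qed

lemma one_le_ln: "3 \<le> x \<Longrightarrow> 1 \<le> ln (x :: real)"
  using exp_le ln_ge_iff by force

lemma potential_bound_le:
  fixes \<xi> q :: real
  assumes "3 \<le> n" "0 \<le> q" "q \<le> 1"
  shows "(\<xi> * sqrt (real n * ln (real n)) + 1)\<^sup>2 + q * real n / 4 * (1 + ln (real n))
           \<le> (2 * \<xi>\<^sup>2 + 3) * (real n * ln (real n))"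
proof -
  define m where "m = real n * ln (real n)"
  have "1 \<le> ln (real n)" using assms by (intro one_le_ln) simp
  then have "real n * 1 \<le> m" unfolding m_def by (intro mult_left_mono) auto
  then have "1 \<le> m" using assms by simp
  have "(\<xi> * sqrt m + 1)\<^sup>2 \<le> 2 * (\<xi> * sqrt m)\<^sup>2 + 2"
    using sum_squares_ge_zero[of "\<xi> * sqrt m - 1" 0] by (simp add: power2_eq_square algebra_simps)
  also have "\<dots> = 2 * \<xi>\<^sup>2 * m + 2"
    using \<open>1 \<le> m\<close> by (simp add: power_mult_distrib)
  finally have "(\<xi> * sqrt m + 1)\<^sup>2 \<le> 2 * \<xi>\<^sup>2 * m + 2 * m"
    using \<open>1 \<le> m\<close> by linarith
  moreover have "q * real n / 4 * (1 + ln (real n)) \<le> m"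
  proof -
    have "q * real n / 4 * (1 + ln (real n)) \<le> 1 * real n / 4 * (2 * ln (real n))"
      using assms \<open>1 \<le> ln (real n)\<close> by (intro mult_mono divide_right_mono) auto
    moreover have "1 * real n / 4 * (2 * ln (real n)) = m / 2"
      by (simp add: m_def)
    ultimately show ?thesis
      using \<open>1 \<le> m\<close> by linarith
  qed
  moreover have "(2 * \<xi>\<^sup>2 + 3) * m = 2 * \<xi>\<^sup>2 * m + 3 * m"
    by (simp add: algebra_simps)
  ultimately show ?thesis
    unfolding m_def[symmetric] by linarith
qed

lemma rounds_times_length_le:
  fixes K C :: real
  assumes "3 \<le> n" "0 \<le> K" "2 * (K + 1) \<le> C"
  shows "nat \<lceil>ln (real n)\<rceil> * (nat \<lfloor>K * (real n * ln (real n))\<rfloor> + 1)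
           \<le> nat \<lfloor>C * real n * (ln (real n))\<^sup>2\<rfloor>"
proof -
  define m where "m = real n * ln (real n)"
  have ln: "1 \<le> ln (real n)" using assms by (intro one_le_ln) simp
  then have "real n * 1 \<le> m" unfolding m_def by (intro mult_left_mono) auto
  then have "1 \<le> m" using assms by simp
  have "real (nat \<lceil>ln (real n)\<rceil>) \<le> 2 * ln (real n)"
    using ln by simp linarith
  moreover have "real (nat \<lfloor>K * m\<rfloor> + 1) \<le> (K + 1) * m"
  proof -
    have "real (nat \<lfloor>K * m\<rfloor> + 1) = real_of_int \<lfloor>K * m\<rfloor> + 1"
      using assms \<open>1 \<le> m\<close> by simp
    moreover have "(K + 1) * m = K * m + m"
      by (simp add: algebra_simps)
    ultimately show ?thesis
      using of_int_floor_le[of "K * m"] \<open>1 \<le> m\<close> by linarith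
  qed
  ultimately have "real (nat \<lceil>ln (real n)\<rceil>) * real (nat \<lfloor>K * m\<rfloor> + 1)
      \<le> 2 * ln (real n) * ((K + 1) * m)"
    using ln by (intro mult_mono) auto
  also have "\<dots> = 2 * (K + 1) * (real n * (ln (real n))\<^sup>2)"
    by (simp add: m_def power2_eq_square algebra_simps)
  also have "\<dots> \<le> C * (real n * (ln (real n))\<^sup>2)"
    using assms by (intro mult_right_mono) auto
  finally have "real (nat \<lceil>ln (real n)\<rceil> * (nat \<lfloor>K * m\<rfloor> + 1))
      \<le> C * real n * (ln (real n))\<^sup>2"
    by (simp only: of_nat_mult mult.assoc)
  then show ?thesis
    unfolding m_def by (rule le_nat_floor)
qed

lemma prob_not_hit_le_inverse:
  fixes n :: nat and p \<xi> C :: real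
  defines "\<theta> \<equiv> \<xi> * sqrt (real n * ln (real n))"
  assumes n: "3 \<le> n" and p: "0 \<le> p" "p < 1" and small: "\<theta> \<le> (1 - p) * real n / 4"
    and start: "s \<in> usd_invariant n p \<theta>"
    and C: "2 * (128 * exp 1 * (2 * \<xi>\<^sup>2 + 3) / (1 - p)\<^sup>2 + 1) \<le> C"
  shows "prob_not_hit n p \<xi> (nat \<lfloor>C * real n * (ln (real n))\<^sup>2\<rfloor>) s \<le> 1 / real n"
proof -
  define m where "m = real n * ln (real n)"
  define K where "K = 128 * exp 1 * (2 * \<xi>\<^sup>2 + 3) / (1 - p)\<^sup>2"
  define L where "L = nat \<lfloor>K * m\<rfloor> + 1"
  define k where "k = nat \<lceil>ln (real n)\<rceil>"
  have "0 \<le> K" by (simp add: K_def)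
  have "real n * 1 \<le> m"
    unfolding m_def using n one_le_ln[of "real n"] by (intro mult_left_mono) auto
  then have "1 \<le> m" using n by simp
  have "exp 1 * ((\<theta> + 1)\<^sup>2 + (1 - p) * real n / 4 * (1 + ln (real n)))
      \<le> exp 1 * ((2 * \<xi>\<^sup>2 + 3) * m)"
    unfolding \<theta>_def m_def using n p by (intro mult_left_mono potential_bound_le) auto
  also have "\<dots> = (1 - p)\<^sup>2 / 128 * (K * m)"
    using p by (simp add: K_def)
  also have "\<dots> < (1 - p)\<^sup>2 / 128 * real L"
    using p \<open>0 \<le> K\<close> \<open>1 \<le> m\<close> by (intro mult_strict_left_mono) (auto simp: L_def, linarith)
  finally have "prob_not_hit n p \<xi> (k * L) s \<le> exp (- real k)"
    unfolding \<theta>_def using n p small start by (intro prob_not_hit_le_exp) (auto simp: \<theta>_def)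
  also have "\<dots> \<le> exp (- ln (real n))"
    by (simp add: k_def real_nat_ceiling_ge)
  also have "\<dots> = 1 / real n"
    using n by (simp add: exp_minus inverse_eq_divide)
  moreover have "prob_not_hit n p \<xi> (nat \<lfloor>C * real n * (ln (real n))\<^sup>2\<rfloor>) s
      \<le> prob_not_hit n p \<xi> (k * L) s"
    using n p C \<open>0 \<le> K\<close> rounds_times_length_le[of n K C]
    by (intro prob_not_hit_antimono) (auto simp: k_def L_def m_def K_def)
  ultimately show ?thesis by linarith
qed

lemma eventually_sqrt_n_ln_n_le_linear:
  fixes \<xi> c :: real
  assumes "0 < c"
  shows "\<forall>\<^sub>F n in sequentially. \<xi> * sqrt (real n * ln (real n)) \<le> c * real n"
proof -
  have "\<forall>\<^sub>F x in at_top. \<xi> * sqrt (x * ln x) \<le> c * x"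
    using assms by real_asymp
  then show ?thesis
    by (rule eventually_compose_filterlim[OF _ filterlim_real_sequentially])
qed

theorem lemma4:
  fixes \<epsilon> p \<xi> :: real
  assumes "0 < \<epsilon>" "\<epsilon> \<le> 1" "0 < p" "p < 1" "0 < \<xi>"
  shows "\<exists>C > 0. \<exists>c > 0. \<exists>n0. \<forall>n \<ge> n0. \<forall>s0 :: config.
           \<epsilon> * real n \<le> real (x1 n s0) \<and> x1 n s0 \<le> x2 n s0 \<and>
           real (und n s0) \<le> real n / 2 \<and>
           \<bar>delta_w n p s0\<bar> < \<xi> * sqrt (real n * ln (real n)) \<longrightarrow>
           prob_not_hit n p \<xi> (nat \<lfloor>C * real n * (ln (real n))\<^sup>2\<rfloor>) s0 \<le> real n powr (- c)"
proof -
  define C where "C = 2 * (128 * exp 1 * (2 * \<xi>\<^sup>2 + 3) / (1 - p)\<^sup>2 + 1)"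
  have "0 < C" by (simp add: C_def add_nonneg_pos)
  have "\<forall>\<^sub>F n in sequentially. 3 \<le> n \<and> \<xi> * sqrt (real n * ln (real n)) \<le> (1 - p) / 4 * real n"
    using assms by (intro eventually_conj eventually_ge_at_top eventually_sqrt_n_ln_n_le_linear) auto
  then obtain n0 where
    n0: "\<And>n. n0 \<le> n \<Longrightarrow> 3 \<le> n \<and> \<xi> * sqrt (real n * ln (real n)) \<le> (1 - p) / 4 * real n"
    by (auto simp: eventually_sequentially)
  have "prob_not_hit n p \<xi> (nat \<lfloor>C * real n * (ln (real n))\<^sup>2\<rfloor>) s0 \<le> real n powr (- 1)"
    if "n0 \<le> n" "\<epsilon> * real n \<le> real (x1 n s0)"
      "\<bar>delta_w n p s0\<bar> < \<xi> * sqrt (real n * ln (real n))"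
    for n s0
  proof -
    have n: "3 \<le> n" "\<xi> * sqrt (real n * ln (real n)) \<le> (1 - p) * real n / 4"
      using n0[OF \<open>n0 \<le> n\<close>] by auto
    have "0 < \<epsilon> * real n" using assms(1) n by simp
    then have "s0 \<in> usd_invariant n p (\<xi> * sqrt (real n * ln (real n)))"
      using that by (simp add: usd_invariant_def)
    then have "prob_not_hit n p \<xi> (nat \<lfloor>C * real n * (ln (real n))\<^sup>2\<rfloor>) s0 \<le> 1 / real n"
      using n assms(3,4) by (intro prob_not_hit_le_inverse) (auto simp: C_def)
    then show ?thesis
      using n by (simp add: powr_minus_divide)
  qed
  then show ?thesis
    using \<open>0 < C\<close> zero_less_one by blast
qed

end
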